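(* Let $A\in\mathbb Z^{d\times n}$ with $\ker(A)\cap\mathbb N^n=\{0\}$. Then $S(A)\subseteq D(A)\subseteq D^w(A)\subseteq G(A)$.
   Context: For $z\in\mathbb Z^n$, $z^\pm\in\mathbb N^n$ are the unique vectors with disjoint supports and $z=z^+-z^-$; $\|\cdot\|$ is the $1$-norm; $\le$ is coordinatewise. For $z\in\ker(A)$ and $u,v\in\ker(A)\setminus\{0\}$ with $z=u+v$: it is a proper conformal decomposition if $z^+=u^++v^+$ and $z^-=u^-+v^-$; a proper semi-conformal decomposition if for every $i$, $u_i>0$ implies $v_i\ge0$; a positive (resp. negative) distance decomposition if $u^+\le z^+$ (resp. $u^-\le z^-$) and $\|v\|<\|z\|$. $S(A)$ is the set of nonzero $z\in\ker(A)$ with no proper semi-conformal decomposition; $G(A)$ the set of nonzero $z\in\ker(A)$ with no proper conformal decomposition; $D^+(A)$ (resp. $D^-(A)$) the set of nonzero $z\in\ker(A)$ with no positive (resp. negative) distance decomposition; $D(A)=D^+(A)\cap D^-(A)$ and $D^w(A)=D^+(A)\cup D^-(A)$. *)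

theory Defs
  imports "HOL-Analysis.Analysis"
begin

definition posp :: "int^'n \<Rightarrow> int^'n" where
  "posp z = (\<chi> i. max (z $ i) 0)"

definition negp :: "int^'n \<Rightarrow> int^'n" where
  "negp z = (\<chi> i. max (- (z $ i)) 0)"

definition norm1 :: "int^'n \<Rightarrow> int" where
  "norm1 z = (\<Sum>i\<in>UNIV. \<bar>z $ i\<bar>)"

definition kerA :: "int^'n^'d \<Rightarrow> (int^'n) set" where
  "kerA A = {z. A *v z = 0}"

definition conformal_dec :: "int^'n \<Rightarrow> int^'n \<Rightarrow> int^'n \<Rightarrow> bool" where
  "conformal_dec z u v \<longleftrightarrow> posp z = posp u + posp v \<and> negp z = negp u + negp v"

definition semiconformal_dec :: "int^'n \<Rightarrow> int^'n \<Rightarrow> bool" where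
  "semiconformal_dec u v \<longleftrightarrow> (\<forall>i. u $ i > 0 \<longrightarrow> v $ i \<ge> 0)"

definition posdist_dec :: "int^'n \<Rightarrow> int^'n \<Rightarrow> int^'n \<Rightarrow> bool" where
  "posdist_dec z u v \<longleftrightarrow> posp u \<le> posp z \<and> norm1 v < norm1 z"

definition negdist_dec :: "int^'n \<Rightarrow> int^'n \<Rightarrow> int^'n \<Rightarrow> bool" where
  "negdist_dec z u v \<longleftrightarrow> negp u \<le> negp z \<and> norm1 v < norm1 z"

definition no_dec :: "int^'n^'d \<Rightarrow> (int^'n \<Rightarrow> int^'n \<Rightarrow> int^'n \<Rightarrow> bool) \<Rightarrow> (int^'n) set" where
  "no_dec A P = {z \<in> kerA A. z \<noteq> 0 \<and>
     \<not> (\<exists>u v. u \<in> kerA A \<and> v \<in> kerA A \<and> u \<noteq> 0 \<and> v \<noteq> 0 \<and> z = u + v \<and> P z u v)}"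

definition Sset :: "int^'n^'d \<Rightarrow> (int^'n) set" where
  "Sset A = no_dec A (\<lambda>z u v. semiconformal_dec u v)"

definition Gset :: "int^'n^'d \<Rightarrow> (int^'n) set" where
  "Gset A = no_dec A conformal_dec"

definition Dplus :: "int^'n^'d \<Rightarrow> (int^'n) set" where
  "Dplus A = no_dec A posdist_dec"

definition Dminus :: "int^'n^'d \<Rightarrow> (int^'n) set" where
  "Dminus A = no_dec A negdist_dec"

definition Dset :: "int^'n^'d \<Rightarrow> (int^'n) set" where
  "Dset A = Dplus A \<inter> Dminus A"

definition Dw :: "int^'n^'d \<Rightarrow> (int^'n) set" where
  "Dw A = Dplus A \<union> Dminus A"

end

theory Submission
  imports Defs
begin

text \<open>Each inclusion holds because one kind of decomposition is a special case of another: a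
  positive (negative) distance decomposition z = u + v is semi-conformal in the order u, v
  (v, u), and a proper conformal decomposition is both a positive and a negative distance
  decomposition, since the 1-norm is additive on it.\<close>

lemma no_dec_antimono:
  assumes "\<And>u v. u \<noteq> 0 \<Longrightarrow> v \<noteq> 0 \<Longrightarrow> P (u + v) u v \<Longrightarrow> Q (u + v) u v"
  shows "no_dec A Q \<subseteq> no_dec A P"
  using assms unfolding no_dec_def by blast

lemma no_dec_swap: "no_dec A (\<lambda>z u v. P z v u) = no_dec A P"
  unfolding no_dec_def by (auto simp: add.commute)

lemma posdist_dec_imp_semiconformal_dec:
  assumes "posdist_dec (u + v) u v"
  shows "semiconformal_dec u v"
  unfolding semiconformal_dec_def
proof (intro allI impI)
  fix i assume "u $ i > 0"
  moreover have "posp u $ i \<le> posp (u + v) $ i"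
    using assms unfolding posdist_dec_def less_eq_vec_def by blast
  ultimately show "v $ i \<ge> 0" unfolding posp_def by auto
qed

lemma negdist_dec_imp_semiconformal_dec:
  assumes "negdist_dec (u + v) u v"
  shows "semiconformal_dec v u"
  unfolding semiconformal_dec_def
proof (intro allI impI)
  fix i assume "v $ i > 0"
  moreover have "negp u $ i \<le> negp (u + v) $ i"
    using assms unfolding negdist_dec_def less_eq_vec_def by blast
  ultimately show "u $ i \<ge> 0" unfolding negp_def by auto
qed

lemma abs_eq_posp_plus_negp: "\<bar>z $ i\<bar> = posp z $ i + negp z $ i"
  unfolding posp_def negp_def by auto

lemma norm1_conformal_dec:
  assumes "conformal_dec z u v"
  shows "norm1 z = norm1 u + norm1 v"
proof -
  have "\<bar>z $ i\<bar> = \<bar>u $ i\<bar> + \<bar>v $ i\<bar>" for i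
    using assms unfolding conformal_dec_def abs_eq_posp_plus_negp by simp
  then show ?thesis unfolding norm1_def by (simp add: sum.distrib)
qed

lemma norm1_pos:
  assumes "u \<noteq> 0"
  shows "norm1 u > 0"
proof -
  obtain i where "u $ i \<noteq> 0" using assms by (metis vec_eq_iff zero_index)
  then have "0 < \<bar>u $ i\<bar>" by simp
  also have "\<bar>u $ i\<bar> \<le> norm1 u" unfolding norm1_def by (rule member_le_sum) auto
  finally show ?thesis .
qed

lemma norm1_less_conformal_dec:
  assumes "conformal_dec z u v" and "u \<noteq> 0"
  shows "norm1 v < norm1 z"
  using norm1_conformal_dec[OF assms(1)] norm1_pos[OF assms(2)] by simp

lemma conformal_dec_imp_posdist_dec:
  assumes "conformal_dec z u v" and "u \<noteq> 0"
  shows "posdist_dec z u v"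
proof -
  have "posp u \<le> posp z"
    using assms(1) unfolding conformal_dec_def less_eq_vec_def posp_def by (auto simp: vec_eq_iff)
  then show ?thesis using norm1_less_conformal_dec[OF assms] unfolding posdist_dec_def by simp
qed

lemma conformal_dec_imp_negdist_dec:
  assumes "conformal_dec z u v" and "u \<noteq> 0"
  shows "negdist_dec z u v"
proof -
  have "negp u \<le> negp z"
    using assms(1) unfolding conformal_dec_def less_eq_vec_def negp_def by (auto simp: vec_eq_iff)
  then show ?thesis using norm1_less_conformal_dec[OF assms] unfolding negdist_dec_def by simp
qed

lemma Sset_subset_Dplus: "Sset A \<subseteq> Dplus A"
  unfolding Sset_def Dplus_def
  by (rule no_dec_antimono) (rule posdist_dec_imp_semiconformal_dec)

lemma Sset_subset_Dminus: "Sset A \<subseteq> Dminus A"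
  unfolding Sset_def Dminus_def no_dec_swap[symmetric, of A "\<lambda>z u v. semiconformal_dec u v"]
  by (rule no_dec_antimono) (rule negdist_dec_imp_semiconformal_dec)

lemma Dplus_subset_Gset: "Dplus A \<subseteq> Gset A"
  unfolding Dplus_def Gset_def by (rule no_dec_antimono) (rule conformal_dec_imp_posdist_dec)

lemma Dminus_subset_Gset: "Dminus A \<subseteq> Gset A"
  unfolding Dminus_def Gset_def by (rule no_dec_antimono) (rule conformal_dec_imp_negdist_dec)

theorem proposition8p6:
  fixes A :: "int^'n^'d"
  assumes "\<forall>z \<in> kerA A. (\<forall>i. z $ i \<ge> 0) \<longrightarrow> z = 0"
  shows "Sset A \<subseteq> Dset A \<and> Dset A \<subseteq> Dw A \<and> Dw A \<subseteq> Gset A"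
  using Sset_subset_Dplus Sset_subset_Dminus Dplus_subset_Gset Dminus_subset_Gset
  unfolding Dset_def Dw_def by blast

end
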